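(* For the symmetric-key scheme $\mathsf{LWE\text{-}SKE}(n,q,\chi)$, there is a quantum algorithm that makes one quantum query to the decryption function $\mathsf{Dec}_{\mathbf k}$ and recovers the entire key $\mathbf k$ with probability at least $4/\pi^2-o(1)$.
   Context: $\mathsf{LWE\text{-}SKE}(n,q,\chi)$, for integers $n\ge1$, $q\ge2$ and a discrete symmetric error distribution $\chi$ on $\mathbb Z_q$: $\mathsf{KeyGen}$ outputs uniform $\mathbf k\in\mathbb Z_q^n$; to encrypt $b\in\{0,1\}$, sample uniform $\mathbf a\in\mathbb Z_q^n$ and $e\leftarrow\chi$ and output $(\mathbf a,\langle\mathbf a,\mathbf k\rangle+b\lfloor q/2\rfloor+e)$; $\mathsf{Dec}_{\mathbf k}(\mathbf a,c)$ outputs $0$ if $|c-\langle\mathbf a,\mathbf k\rangle|\le\lfloor q/4\rfloor$ and $1$ otherwise (inner products mod $q$, $|\cdot|$ the absolute value of the representative of least absolute value). A quantum query to $\mathsf{Dec}_{\mathbf k}$ means one application of the unitary $|\mathbf a,c\rangle|y\rangle\mapsto|\mathbf a,c\rangle|y\oplus\mathsf{Dec}_{\mathbf k}(\mathbf a,c)\rangle$ on arbitrary superpositions of ciphertexts $(\mathbf a,c)\in\mathbb Z_q^{n+1}$. *)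

theory Defs
  imports "HOL-Analysis.Analysis" "HOL-Library.FuncSet"
begin

text \<open>Elements of Z_q^n: extensional functions on {0..<n} with values in {0..<q}.\<close>
definition zq_vecs :: "nat \<Rightarrow> nat \<Rightarrow> (nat \<Rightarrow> int) set" where
  "zq_vecs n q = ({0..<n} \<rightarrow>\<^sub>E {0..<int q})"

definition ip_mod :: "nat \<Rightarrow> nat \<Rightarrow> (nat \<Rightarrow> int) \<Rightarrow> (nat \<Rightarrow> int) \<Rightarrow> int" where
  "ip_mod n q a k = (\<Sum>i<n. a i * k i) mod int q"

text \<open>Absolute value of the representative of least absolute value of x mod q.\<close>
definition cabs :: "nat \<Rightarrow> int \<Rightarrow> int" where
  "cabs q x = min (x mod int q) (int q - x mod int q)"

text \<open>LWE-SKE decryption; True encodes the bit 1, False the bit 0.\<close>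
definition lwe_dec :: "nat \<Rightarrow> nat \<Rightarrow> (nat \<Rightarrow> int) \<Rightarrow> (nat \<Rightarrow> int) \<times> int \<Rightarrow> bool" where
  "lwe_dec n q k ac = (cabs q (snd ac - ip_mod n q (fst ac) k) > int q div 4)"

text \<open>Computational basis of the algorithm's register: a ciphertext register (a,c) in Z_q^(n+1),
  the one-qubit answer register y, and a workspace register with m basis states.\<close>
type_synonym basis = "((nat \<Rightarrow> int) \<times> int) \<times> bool \<times> nat"

definition qbasis :: "nat \<Rightarrow> nat \<Rightarrow> nat \<Rightarrow> basis set" where
  "qbasis n q m = (zq_vecs n q \<times> {0..<int q}) \<times> UNIV \<times> {0..<m}"

definition unit_state :: "basis set \<Rightarrow> (basis \<Rightarrow> complex) \<Rightarrow> bool" where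
  "unit_state B \<psi> \<longleftrightarrow> (\<forall>x. x \<notin> B \<longrightarrow> \<psi> x = 0) \<and> (\<Sum>x\<in>B. (cmod (\<psi> x))^2) = 1"

text \<open>A unitary operator on the span of B, given by its matrix U x y = <x|U|y>.\<close>
definition unitary_on :: "basis set \<Rightarrow> (basis \<Rightarrow> basis \<Rightarrow> complex) \<Rightarrow> bool" where
  "unitary_on B U \<longleftrightarrow>
     (\<forall>x\<in>B. \<forall>z\<in>B. (\<Sum>y\<in>B. cnj (U y x) * U y z) = (if x = z then 1 else 0))"

definition apply_op :: "basis set \<Rightarrow> (basis \<Rightarrow> basis \<Rightarrow> complex) \<Rightarrow> (basis \<Rightarrow> complex) \<Rightarrow> (basis \<Rightarrow> complex)" where
  "apply_op B U \<psi> = (\<lambda>x. if x \<in> B then (\<Sum>y\<in>B. U x y * \<psi> y) else 0)"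

text \<open>One quantum query to Dec_k: |a,c>|y>|w> \<mapsto> |a,c>|y xor Dec_k(a,c)>|w>.
  This permutation is an involution, so the image state is psi composed with it.\<close>
definition dec_oracle :: "nat \<Rightarrow> nat \<Rightarrow> (nat \<Rightarrow> int) \<Rightarrow> (basis \<Rightarrow> complex) \<Rightarrow> (basis \<Rightarrow> complex)" where
  "dec_oracle n q k \<psi> = (\<lambda>(ac, y, w). \<psi> (ac, y \<noteq> lwe_dec n q k ac, w))"

text \<open>A one-query quantum algorithm: start in (any k-independent) unit state psi, make one
  query to Dec_k, apply a unitary U, measure in the computational basis, and output out(x).\<close>
definition success_prob ::
  "nat \<Rightarrow> nat \<Rightarrow> nat \<Rightarrow> (basis \<Rightarrow> complex) \<Rightarrow> (basis \<Rightarrow> basis \<Rightarrow> complex)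
     \<Rightarrow> (basis \<Rightarrow> (nat \<Rightarrow> int)) \<Rightarrow> (nat \<Rightarrow> int) \<Rightarrow> real" where
  "success_prob n q m \<psi> U out k =
     (\<Sum>x\<in>{x\<in>qbasis n q m. out x = k}.
        (cmod (apply_op (qbasis n q m) U (dec_oracle n q k \<psi>) x))^2)"

end

(* The algorithm prepares the uniform superposition of all ciphertexts (a, c) in Z_q^(n+1), with
   the answer qubit in the state |->, so that the single query only multiplies the amplitude of
   (a, c) by (-1)^Dec_k(a, c). This sign is a square wave in c - <a, k>; hence after the Fourier
   transform on Z_q^(n+1) the amplitude of the basis state (u, v) = (k, -1) is, up to normalisation,
   the Fourier coefficient T_q = sum_x e_q(x) (-1)^[|x| > q/4] of that square wave, and measuring u
   yields k with probability at least |T_q / q|^2.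
   On the window [-L, q - L) with L = floor(q/4) the square wave is 2 [x <= L] - 1, so T_q is twice
   the Dirichlet kernel sum_{|x| <= L} e_q(x), whose real part is
   sin((2L + 1) pi/q) / sin(pi/q) >= cos(pi/q) / sin(pi/q) >= q cos(pi/q) / pi.
   Hence |T_q / q|^2 >= 4/pi^2 cos^2(pi/q) = 4/pi^2 - 4/pi^2 sin^2(pi/q). *)

theory Submission
  imports Defs "HOL-Real_Asymp.Real_Asymp"
begin

section \<open>Characters of Z_q and character sums\<close>

definition zq_char :: "nat \<Rightarrow> int \<Rightarrow> complex" where
  "zq_char q t = cis (2 * pi * of_int t / of_nat q)"

lemma zq_char_add: "zq_char q (s + t) = zq_char q s * zq_char q t"
  by (simp add: zq_char_def cis_mult add_divide_distrib distrib_left)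

lemma cnj_zq_char: "cnj (zq_char q t) = zq_char q (- t)"
  by (simp add: zq_char_def cis_cnj)

lemma zq_char_sum: "zq_char q (sum f A) = (\<Prod>i\<in>A. zq_char q (f i))"
proof (induction A rule: infinite_finite_induct)
  case (insert x F)
  then show ?case by (simp add: zq_char_add)
qed (simp_all add: zq_char_def)

lemma zq_char_power: "zq_char q t ^ u = zq_char q (int u * t)"
  unfolding zq_char_def Complex.DeMoivre by (rule arg_cong[where f = cis]) simp

lemma zq_char_eq_1_iff:
  assumes "q > 0"
  shows "zq_char q t = 1 \<longleftrightarrow> int q dvd t"
proof
  assume "zq_char q t = 1"
  then obtain m where "2 * pi * of_int t / of_nat q = of_int (2 * m) * pi"
    unfolding zq_char_def cis_conv_exp exp_eq_1 by auto
  then have "of_int t = (of_int (m * int q) :: real)"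
    using assms by (simp add: field_simps)
  then show "int q dvd t"
    by (metis dvd_triv_right of_int_eq_iff)
next
  assume "int q dvd t"
  then obtain m where "t = int q * m" ..
  then have "2 * pi * of_int t / of_nat q = 2 * pi * of_int m"
    using assms by simp
  then show "zq_char q t = 1"
    by (simp add: zq_char_def cis_multiple_2pi)
qed

lemma zq_char_mult_self:
  assumes "q > 0"
  shows "zq_char q (int q * m) = 1"
  using assms by (simp add: zq_char_eq_1_iff)

lemma zq_char_mod:
  assumes "q > 0"
  shows "zq_char q (t mod int q) = zq_char q t"
proof -
  have "zq_char q t = zq_char q (t mod int q) * zq_char q (int q * (t div int q))"
    by (metis mod_mult_div_eq mult.commute zq_char_add)
  with assms show ?thesis
    by (simp add: zq_char_mult_self)
qed

lemma sum_zq_char_mult: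
  assumes "q > 0"
  shows "(\<Sum>u\<in>{0..<int q}. zq_char q (u * d)) = (if int q dvd d then of_nat q else 0)"
proof -
  have "{0..<int q} = int ` {..<q}"
    by (simp add: image_int_atLeastLessThan atLeast0LessThan[symmetric])
  then have "(\<Sum>u\<in>{0..<int q}. zq_char q (u * d)) = (\<Sum>u<q. zq_char q d ^ u)"
    by (simp add: zq_char_power sum.reindex)
  also have "\<dots> = (if int q dvd d then of_nat q else 0)"
  proof (cases "int q dvd d")
    case True
    then have "zq_char q d = 1"
      using assms by (simp add: zq_char_eq_1_iff)
    with True show ?thesis
      by simp
  next
    case False
    have "zq_char q d ^ q = 1"
      using assms by (simp add: zq_char_power zq_char_eq_1_iff)
    with False assms show ?thesis
      by (simp add: geometric_sum zq_char_eq_1_iff)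
  qed
  finally show ?thesis .
qed

lemma residues_dvd_diff_iff:
  assumes "c \<in> {0..<int q}" and "c' \<in> {0..<int q}"
  shows "int q dvd c - c' \<longleftrightarrow> c = c'"
  using assms by (auto simp flip: mod_eq_dvd_iff)

lemma sum_zq_char_dot:
  assumes q: "q > 0" and a: "a \<in> zq_vecs n q" and a': "a' \<in> zq_vecs n q"
  shows "(\<Sum>u\<in>zq_vecs n q. zq_char q (\<Sum>i<n. u i * (a i - a' i)))
           = (if a = a' then of_nat q ^ n else 0)"
proof -
  have "(\<Sum>u\<in>zq_vecs n q. zq_char q (\<Sum>i<n. u i * (a i - a' i)))
      = (\<Sum>u\<in>{0..<n} \<rightarrow>\<^sub>E {0..<int q}. \<Prod>i\<in>{0..<n}. zq_char q (u i * (a i - a' i)))"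
    by (simp add: zq_vecs_def zq_char_sum atLeast0LessThan)
  also have "\<dots> = (\<Prod>i\<in>{0..<n}. \<Sum>u\<in>{0..<int q}. zq_char q (u * (a i - a' i)))"
    by (rule prod_sum_PiE[symmetric]) auto
  also have "\<dots> = (\<Prod>i\<in>{0..<n}. if a i = a' i then of_nat q else 0)"
    using a a' by (intro prod.cong refl)
      (simp add: sum_zq_char_mult[OF q] residues_dvd_diff_iff zq_vecs_def PiE_iff)
  also have "\<dots> = (if a = a' then of_nat q ^ n else 0)"
  proof (cases "a = a'")
    case False
    then obtain i where "i \<in> {0..<n}" "a i \<noteq> a' i"
      using a a' PiE_ext unfolding zq_vecs_def by metis
    then show ?thesis
      using False by (auto intro: prod_zero)
  qed simp
  finally show ?thesis .
qed

lemma bij_betw_mod_shift: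
  fixes q :: int
  assumes "q > 0"
  shows "bij_betw (\<lambda>x. (x + s) mod q) {t..<t + q} {0..<q}"
proof -
  have "inj_on (\<lambda>x. (x + s) mod q) {t..<t + q}"
  proof (rule inj_onI)
    fix x y assume x: "x \<in> {t..<t + q}" and y: "y \<in> {t..<t + q}"
      and "(x + s) mod q = (y + s) mod q"
    then have "q dvd x - y"
      by (metis mod_eq_dvd_iff add_diff_cancel_right)
    moreover have "\<bar>x - y\<bar> < q"
      using x y by auto
    ultimately show "x = y"
      using dvd_imp_le_int[of "x - y" q] by fastforce
  qed
  moreover have "(\<lambda>x. (x + s) mod q) ` {t..<t + q} \<subseteq> {0..<q}"
    using assms by auto
  ultimately show ?thesis
    unfolding bij_betw_def by (simp add: card_image card_subset_eq)
qed

lemma sum_periodic_shift: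
  fixes H :: "int \<Rightarrow> 'a::comm_monoid_add" and q :: int
  assumes "q > 0" and periodic: "\<And>x. H (x mod q) = H x"
  shows "(\<Sum>x\<in>{t..<t + q}. H (x + s)) = (\<Sum>x\<in>{0..<q}. H x)"
  using sum.reindex_bij_betw[OF bij_betw_mod_shift[OF \<open>q > 0\<close>], of H] by (simp add: periodic)

corollary sum_periodic_window:
  fixes H :: "int \<Rightarrow> 'a::comm_monoid_add" and q :: int
  assumes "q > 0" and "\<And>x. H (x mod q) = H x"
  shows "(\<Sum>x\<in>{t..<t + q}. H x) = (\<Sum>x\<in>{0..<q}. H x)"
  using sum_periodic_shift[where H = H and s = 0, OF assms] by simp

lemma dirichlet_kernel:
  fixes \<theta> :: real
  shows "sin (\<theta> / 2) * (\<Sum>x\<in>{-int L..int L}. cos (of_int x * \<theta>)) = sin ((2 * real L + 1) * \<theta> / 2)"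
proof (induction L)
  case (Suc L)
  have "{-int (Suc L)..int (Suc L)} = insert (-(int L + 1)) (insert (int L + 1) {-int L..int L})"
    by auto
  moreover have "cos ((- real L - 1) * \<theta>) = cos ((real L + 1) * \<theta>)"
    by (subst cos_minus[symmetric]) (simp add: algebra_simps)
  ultimately have sum: "(\<Sum>x\<in>{-int (Suc L)..int (Suc L)}. cos (of_int x * \<theta>))
      = 2 * cos ((real L + 1) * \<theta>) + (\<Sum>x\<in>{-int L..int L}. cos (of_int x * \<theta>))"
    by simp
  have "((2 * real (Suc L) + 1) * \<theta> / 2 - (2 * real L + 1) * \<theta> / 2) / 2 = \<theta> / 2"
    and "((2 * real (Suc L) + 1) * \<theta> / 2 + (2 * real L + 1) * \<theta> / 2) / 2 = (real L + 1) * \<theta>"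
    by (simp_all add: field_simps)
  then have "sin ((2 * real (Suc L) + 1) * \<theta> / 2) - sin ((2 * real L + 1) * \<theta> / 2)
      = 2 * sin (\<theta> / 2) * cos ((real L + 1) * \<theta>)"
    by (simp only: sin_diff_sin)
  with sum Suc.IH show ?case
    by (simp add: distrib_left)
qed simp

section \<open>The Fourier coefficient of the decryption square wave\<close>

definition bit_sign :: "bool \<Rightarrow> complex" where
  "bit_sign b = (if b then -1 else 1)"

definition square_wave :: "nat \<Rightarrow> int \<Rightarrow> complex" where
  "square_wave q x = bit_sign (int q div 4 < cabs q x)"

definition square_wave_coeff :: "nat \<Rightarrow> complex" where
  "square_wave_coeff q = (\<Sum>x\<in>{0..<int q}. zq_char q x * square_wave q x)"

lemma square_wave_mod: "square_wave q (x mod int q) = square_wave q x"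
  by (simp add: square_wave_def cabs_def)

lemma cabs_le_quarter_iff:
  assumes "q > 0" and "- (int q div 4) \<le> x" and "x < int q - int q div 4"
  shows "cabs q x \<le> int q div 4 \<longleftrightarrow> x \<le> int q div 4"
proof (cases "x \<ge> 0")
  case True
  then have "x mod int q = x"
    using assms by simp
  then show ?thesis
    using assms unfolding cabs_def by auto
next
  case False
  then have "(x + int q) mod int q = x + int q"
    using assms by (intro mod_pos_pos_trivial) auto
  then have "x mod int q = x + int q"
    by simp
  then show ?thesis
    using False assms unfolding cabs_def by auto
qed

lemma square_wave_coeff_eq_dirichlet:
  assumes q: "q \<ge> 2"
  defines "L \<equiv> int q div 4"
  shows "square_wave_coeff q = 2 * (\<Sum>x\<in>{-L..L}. zq_char q x)"
proof -
  have q0: "q > 0" and "int q > 0"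
    using q by auto
  let ?W = "{-L..<-L + int q}"
  have "square_wave_coeff q = (\<Sum>x\<in>?W. zq_char q x * square_wave q x)"
    unfolding square_wave_coeff_def
    by (rule sum_periodic_window[symmetric, OF \<open>int q > 0\<close>])
      (simp add: zq_char_mod[OF q0] square_wave_mod)
  also have "\<dots> = (\<Sum>x\<in>?W. 2 * (if x \<le> L then zq_char q x else 0) - zq_char q x)"
  proof (rule sum.cong)
    fix x assume "x \<in> ?W"
    then have "cabs q x \<le> L \<longleftrightarrow> x \<le> L"
      using cabs_le_quarter_iff[OF q0, of x] unfolding L_def by auto
    then show "zq_char q x * square_wave q x = 2 * (if x \<le> L then zq_char q x else 0) - zq_char q x"
      unfolding square_wave_def bit_sign_def L_def by auto
  qed simp
  also have "\<dots> = 2 * (\<Sum>x\<in>?W. if x \<le> L then zq_char q x else 0) - (\<Sum>x\<in>?W. zq_char q x)"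
    by (simp add: sum_subtractf sum_distrib_left)
  also have "(\<Sum>x\<in>?W. if x \<le> L then zq_char q x else 0) = (\<Sum>x\<in>{-L..L}. zq_char q x)"
  proof -
    have "{x\<in>?W. x \<le> L} = {-L..L}"
      using q unfolding L_def by auto
    then show ?thesis
      by (simp flip: sum.inter_filter)
  qed
  also have "(\<Sum>x\<in>?W. zq_char q x) = 0"
  proof -
    have "(\<Sum>x\<in>?W. zq_char q x) = (\<Sum>x\<in>{0..<int q}. zq_char q x)"
      by (rule sum_periodic_window[OF \<open>int q > 0\<close>]) (rule zq_char_mod[OF q0])
    also have "\<dots> = 0"
      using sum_zq_char_mult[OF q0, of 1] q by simp
    finally show ?thesis .
  qed
  finally show ?thesis by simp
qed

lemma cos_le_sin_odd_quarter:
  assumes "q \<ge> 2"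
  shows "cos (pi / q) \<le> sin ((2 * real (q div 4) + 1) * pi / q)"
proof -
  define \<delta> where "\<delta> = (4 * real (q div 4) + 2 - q) * pi / (2 * real q)"
  have "(2 * real (q div 4) + 1) * pi / q = pi / 2 + \<delta>"
    using assms unfolding \<delta>_def by (simp add: field_simps)
  then have "sin ((2 * real (q div 4) + 1) * pi / q) = cos \<delta>"
    by (simp add: sin_add)
  moreover have "\<bar>\<delta>\<bar> \<le> pi / q"
  proof -
    have "\<bar>\<delta>\<bar> = \<bar>4 * real (q div 4) + 2 - q\<bar> * (pi / (2 * real q))"
      unfolding \<delta>_def by (simp add: abs_mult)
    also have "\<dots> \<le> 2 * (pi / (2 * real q))"
      by (rule mult_right_mono) (linarith, simp)
    finally show ?thesis
      by simp
  qed
  moreover have "pi / q \<le> pi"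
    using assms by (simp add: field_simps)
  ultimately show ?thesis
    using cos_monotone_0_pi_le[of "\<bar>\<delta>\<bar>" "pi / q"] by simp
qed

lemma cos_pi_div_nonneg:
  fixes q :: nat
  assumes "q \<ge> 2"
  shows "cos (pi / q) \<ge> 0"
proof (rule cos_ge_zero)
  show "pi / q \<le> pi / 2"
    using assms by (intro divide_left_mono) auto
  show "- (pi / 2) \<le> pi / q"
    using pi_gt_zero divide_nonneg_nonneg[of pi "real q"] by linarith
qed

lemma re_square_wave_coeff_ge:
  assumes q: "q \<ge> 2"
  shows "2 * cos (pi / q) / pi \<le> Re (square_wave_coeff q) / q"
proof -
  define L where "L = q div 4"
  define D where "D = (\<Sum>x\<in>{-int L..int L}. cos (of_int x * (2 * pi / q)))"
  define s where "s = sin ((2 * real L + 1) * pi / q)"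
  have re: "Re (square_wave_coeff q) = 2 * D"
    unfolding square_wave_coeff_eq_dirichlet[OF q] D_def L_def
    by (simp add: Re_sum zq_char_def zdiv_int algebra_simps)
  have "0 < pi / q" and "pi / q < pi"
    using q by (simp_all add: field_simps)
  then have sin_pos: "sin (pi / q) > 0"
    by (rule sin_gt_zero)
  have kernel: "sin (pi / q) * D = s"
    using dirichlet_kernel[of "2 * pi / q" L] unfolding D_def s_def by simp
  have sin_le: "q * sin (pi / q) \<le> pi"
    using sin_x_le_x[of "pi / q"] \<open>0 < pi / q\<close> q by (simp add: field_simps)
  have cos_le: "cos (pi / q) \<le> s"
    using cos_le_sin_odd_quarter[OF q] unfolding s_def L_def .
  have "2 * cos (pi / q) / pi \<le> 2 * s / pi"
    using cos_le by (simp add: divide_right_mono)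
  also have "\<dots> \<le> 2 * s / (q * sin (pi / q))"
    using sin_le sin_pos cos_le cos_pi_div_nonneg[OF q] q by (intro divide_left_mono) auto
  also have "\<dots> = Re (square_wave_coeff q) / q"
    using re kernel sin_pos q by (simp add: field_simps)
  finally show ?thesis .
qed

lemma norm_square_wave_coeff_ge:
  assumes "q \<ge> 2"
  shows "(2 * cos (pi / q) / pi)\<^sup>2 \<le> (norm (square_wave_coeff q) / q)\<^sup>2"
proof (rule power_mono)
  have "Re (square_wave_coeff q) / q \<le> norm (square_wave_coeff q) / q"
    by (simp add: complex_Re_le_cmod divide_right_mono)
  then show "2 * cos (pi / q) / pi \<le> norm (square_wave_coeff q) / q"
    using re_square_wave_coeff_ge[OF assms] by linarith
  show "0 \<le> 2 * cos (pi / q) / pi"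
    using cos_pi_div_nonneg[OF assms] by simp
qed

section \<open>The key-recovery algorithm\<close>

definition dot :: "nat \<Rightarrow> (nat \<Rightarrow> int) \<Rightarrow> (nat \<Rightarrow> int) \<Rightarrow> int" where
  "dot n u a = (\<Sum>i<n. u i * a i)"

definition fourier_kernel :: "nat \<Rightarrow> nat \<Rightarrow> (nat \<Rightarrow> int) \<times> int \<Rightarrow> (nat \<Rightarrow> int) \<times> int \<Rightarrow> complex"
  where "fourier_kernel n q y x = zq_char q (- (dot n (fst y) (fst x) + snd y * snd x))"

lemma fourier_kernel_orthogonal:
  assumes q: "q > 0" and x: "x \<in> zq_vecs n q \<times> {0..<int q}" and z: "z \<in> zq_vecs n q \<times> {0..<int q}"
  shows "(\<Sum>y\<in>zq_vecs n q \<times> {0..<int q}. cnj (fourier_kernel n q y x) * fourier_kernel n q y z)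
           = (if x = z then of_nat q ^ Suc n else 0)"
proof -
  obtain a c a' c' where xz: "x = (a, c)" "z = (a', c')"
    by (cases x, cases z)
  have "cnj (fourier_kernel n q (u, v) x) * fourier_kernel n q (u, v) z
      = zq_char q (\<Sum>i<n. u i * (a i - a' i)) * zq_char q (v * (c - c'))" for u v
  proof -
    have "cnj (fourier_kernel n q (u, v) x) * fourier_kernel n q (u, v) z
        = zq_char q ((dot n u a + v * c) + - (dot n u a' + v * c'))"
      by (simp add: fourier_kernel_def xz cnj_zq_char zq_char_add)
    also have "(dot n u a + v * c) + - (dot n u a' + v * c') = (\<Sum>i<n. u i * (a i - a' i)) + v * (c - c')"
      unfolding dot_def by (simp add: algebra_simps sum_subtractf)
    finally show ?thesis
      by (simp only: zq_char_add)
  qed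
  then have "(\<Sum>y\<in>zq_vecs n q \<times> {0..<int q}. cnj (fourier_kernel n q y x) * fourier_kernel n q y z)
      = (\<Sum>(u, v)\<in>zq_vecs n q \<times> {0..<int q}. zq_char q (\<Sum>i<n. u i * (a i - a' i)) * zq_char q (v * (c - c')))"
    by (intro sum.cong) auto
  also have "\<dots> = (\<Sum>u\<in>zq_vecs n q. zq_char q (\<Sum>i<n. u i * (a i - a' i)))
      * (\<Sum>v\<in>{0..<int q}. zq_char q (v * (c - c')))"
    by (simp add: sum_product sum.cartesian_product)
  also have "\<dots> = (if a = a' then of_nat q ^ n else 0) * (if c = c' then of_nat q else 0)"
    using x z unfolding xz
    by (simp add: sum_zq_char_dot[OF q] sum_zq_char_mult[OF q] residues_dvd_diff_iff)
  finally show ?thesis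
    unfolding xz by simp
qed

definition qft :: "nat \<Rightarrow> nat \<Rightarrow> basis \<Rightarrow> basis \<Rightarrow> complex" where
  "qft n q y x = (if snd y = snd x
     then fourier_kernel n q (fst y) (fst x) / complex_of_real (sqrt (real q ^ Suc n)) else 0)"

lemma sum_qbasis_if_snd_eq:
  assumes "r \<in> UNIV \<times> {0..<m}"
  shows "(\<Sum>y\<in>qbasis n q m. if snd y = r then f (fst y) else 0) = (\<Sum>p\<in>zq_vecs n q \<times> {0..<int q}. f p)"
  using assms unfolding qbasis_def sum.cartesian_product'[of _ "zq_vecs n q \<times> {0..<int q}"] by simp

lemma unitary_on_qft:
  assumes "q > 0"
  shows "unitary_on (qbasis n q m) (qft n q)"
  unfolding unitary_on_def
proof (intro ballI)
  fix x z assume x: "x \<in> qbasis n q m" and z: "z \<in> qbasis n q m"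
  define N where "N = real q ^ Suc n"
  have "complex_of_real (sqrt N) * complex_of_real (sqrt N) = complex_of_real N"
    unfolding N_def by (simp flip: of_real_mult)
  also have "\<dots> = of_nat q ^ Suc n"
    unfolding N_def by simp
  finally have sqrt_sq: "complex_of_real (sqrt N) * complex_of_real (sqrt N) = of_nat q ^ Suc n" .
  have pointwise: "cnj (qft n q y x) * qft n q y z = (if snd y = snd x then
      (if snd x = snd z then cnj (fourier_kernel n q (fst y) (fst x)) * fourier_kernel n q (fst y) (fst z)
        / of_nat q ^ Suc n else 0) else 0)" for y
    unfolding qft_def N_def[symmetric] using sqrt_sq by simp
  have fst_mem: "fst x \<in> zq_vecs n q \<times> {0..<int q}" "fst z \<in> zq_vecs n q \<times> {0..<int q}"
    and snd_mem: "snd x \<in> UNIV \<times> {0..<m}"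
    using x z unfolding qbasis_def by (simp_all add: mem_Times_iff)
  have "(\<Sum>y\<in>qbasis n q m. cnj (qft n q y x) * qft n q y z)
      = (\<Sum>p\<in>zq_vecs n q \<times> {0..<int q}. if snd x = snd z
           then cnj (fourier_kernel n q p (fst x)) * fourier_kernel n q p (fst z) / of_nat q ^ Suc n else 0)"
    unfolding pointwise by (rule sum_qbasis_if_snd_eq[OF snd_mem])
  also have "\<dots> = (if snd x = snd z then (\<Sum>p\<in>zq_vecs n q \<times> {0..<int q}.
      cnj (fourier_kernel n q p (fst x)) * fourier_kernel n q p (fst z)) / of_nat q ^ Suc n else 0)"
    by (simp add: sum_divide_distrib)
  also have "\<dots> = (if x = z then 1 else 0)"
    unfolding fourier_kernel_orthogonal[OF assms fst_mem] using assms by (simp add: prod_eq_iff[of x z])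
  finally show "(\<Sum>y\<in>qbasis n q m. cnj (qft n q y x) * qft n q y z) = (if x = z then 1 else 0)" .
qed

definition init_state :: "nat \<Rightarrow> nat \<Rightarrow> basis \<Rightarrow> complex" where
  "init_state n q x = (if x \<in> qbasis n q 1
     then bit_sign (fst (snd x)) / complex_of_real (sqrt (2 * real q ^ Suc n)) else 0)"

lemma card_zq_vecs: "card (zq_vecs n q) = q ^ n"
  by (simp add: zq_vecs_def card_PiE)

lemma finite_qbasis: "finite (qbasis n q m)"
  by (simp add: qbasis_def zq_vecs_def finite_PiE)

lemma card_qbasis: "card (qbasis n q m) = 2 * m * q ^ Suc n"
  by (simp add: qbasis_def card_zq_vecs card_cartesian_product)

lemma unit_state_init_state:
  assumes "q > 0"
  shows "unit_state (qbasis n q 1) (init_state n q)"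
  unfolding unit_state_def
proof
  show "\<forall>x. x \<notin> qbasis n q 1 \<longrightarrow> init_state n q x = 0"
    by (simp add: init_state_def)
  have "(cmod (init_state n q x))\<^sup>2 = 1 / (2 * real q ^ Suc n)" if "x \<in> qbasis n q 1" for x
    using that by (simp add: init_state_def bit_sign_def norm_divide power_divide)
  then have "(\<Sum>x\<in>qbasis n q 1. (cmod (init_state n q x))\<^sup>2) = card (qbasis n q 1) / (2 * real q ^ Suc n)"
    by simp
  also have "\<dots> = 1"
    using assms by (simp add: card_qbasis)
  finally show "(\<Sum>x\<in>qbasis n q 1. (cmod (init_state n q x))\<^sup>2) = 1" .
qed

lemma dec_oracle_init_state:
  assumes "((a, c), b, w) \<in> qbasis n q 1"
  shows "dec_oracle n q k (init_state n q) ((a, c), b, w)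
           = bit_sign b * square_wave q (c - ip_mod n q a k) / complex_of_real (sqrt (2 * real q ^ Suc n))"
  using assms
  by (simp add: dec_oracle_def init_state_def qbasis_def square_wave_def lwe_dec_def bit_sign_def)

lemma fourier_kernel_at_key:
  assumes "q > 0"
  shows "fourier_kernel n q (k, int q - 1) (a, c) = zq_char q (c - ip_mod n q a k)"
proof -
  have "- (dot n k a + (int q - 1) * c) = (c - dot n k a) + int q * (- c)"
    by (simp add: algebra_simps)
  then have "fourier_kernel n q (k, int q - 1) (a, c) = zq_char q (c - dot n k a) * zq_char q (int q * (- c))"
    unfolding fourier_kernel_def fst_conv snd_conv zq_char_add[symmetric] by (rule arg_cong)
  also have "\<dots> = zq_char q ((c - dot n k a) mod int q)"
    using assms zq_char_mult_self[OF assms, of "- c"] by (simp add: zq_char_mod)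
  also have "(c - dot n k a) mod int q = (c - ip_mod n q a k) mod int q"
    unfolding dot_def ip_mod_def by (simp add: mod_diff_right_eq mult.commute)
  finally show ?thesis
    using assms by (simp add: zq_char_mod)
qed

lemma amplitude_at_key:
  assumes q: "q > 0" and k: "k \<in> zq_vecs n q"
  shows "apply_op (qbasis n q 1) (qft n q) (dec_oracle n q k (init_state n q)) ((k, int q - 1), b, 0)
    = of_nat q ^ n * bit_sign b * square_wave_coeff q
        / (complex_of_real (sqrt (real q ^ Suc n)) * complex_of_real (sqrt (2 * real q ^ Suc n)))"
    (is "?amp = _ / ?S")
proof -
  let ?\<psi> = "dec_oracle n q k (init_state n q)"
  define H where "H x = zq_char q x * square_wave q x" for x
  have "((k, int q - 1), b, 0) \<in> qbasis n q 1"
    using q k by (simp add: qbasis_def)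
  then have "?amp = (\<Sum>y\<in>qbasis n q 1. qft n q ((k, int q - 1), b, 0) y * ?\<psi> y)"
    by (simp add: apply_op_def)
  also have "\<dots> = (\<Sum>y\<in>qbasis n q 1. if snd y = (b, 0)
      then fourier_kernel n q (k, int q - 1) (fst y) * ?\<psi> (fst y, b, 0)
        / complex_of_real (sqrt (real q ^ Suc n)) else 0)"
    by (intro sum.cong) (auto simp: qft_def)
  also have "\<dots> = (\<Sum>p\<in>zq_vecs n q \<times> {0..<int q}. fourier_kernel n q (k, int q - 1) p * ?\<psi> (p, b, 0)
        / complex_of_real (sqrt (real q ^ Suc n)))"
    by (rule sum_qbasis_if_snd_eq) simp
  also have "\<dots> = (\<Sum>(a, c)\<in>zq_vecs n q \<times> {0..<int q}. bit_sign b * H (c - ip_mod n q a k) / ?S)"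
    using q by (intro sum.cong refl)
      (auto simp: dec_oracle_init_state qbasis_def fourier_kernel_at_key H_def mult_ac)
  also have "\<dots> = (\<Sum>a\<in>zq_vecs n q. bit_sign b * (\<Sum>c\<in>{0..<int q}. H (c - ip_mod n q a k)) / ?S)"
    by (simp add: sum.cartesian_product[symmetric] sum_distrib_left sum_divide_distrib)
  also have "\<dots> = (\<Sum>a\<in>zq_vecs n q. bit_sign b * square_wave_coeff q / ?S)"
  proof (intro sum.cong refl)
    fix a
    have "(\<Sum>c\<in>{0..<0 + int q}. H (c + - ip_mod n q a k)) = square_wave_coeff q"
      unfolding square_wave_coeff_def H_def[symmetric] using q
      by (intro sum_periodic_shift) (simp_all add: H_def zq_char_mod square_wave_mod)
    then show "bit_sign b * (\<Sum>c\<in>{0..<int q}. H (c - ip_mod n q a k)) / ?S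
        = bit_sign b * square_wave_coeff q / ?S"
      by simp
  qed
  also have "\<dots> = of_nat q ^ n * bit_sign b * square_wave_coeff q / ?S"
    by (simp add: card_zq_vecs)
  finally show ?thesis .
qed

lemma norm_amplitude_at_key:
  assumes q: "q > 0" and k: "k \<in> zq_vecs n q"
  shows "(cmod (apply_op (qbasis n q 1) (qft n q) (dec_oracle n q k (init_state n q)) ((k, int q - 1), b, 0)))\<^sup>2
    = (cmod (square_wave_coeff q))\<^sup>2 / (2 * real q ^ 2)"
proof -
  have "cmod (bit_sign b) = 1"
    by (simp add: bit_sign_def)
  then have "(cmod (apply_op (qbasis n q 1) (qft n q) (dec_oracle n q k (init_state n q)) ((k, int q - 1), b, 0)))\<^sup>2
    = (real q ^ n)\<^sup>2 * (cmod (square_wave_coeff q))\<^sup>2 / (real q ^ Suc n * (2 * real q ^ Suc n))"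
    unfolding amplitude_at_key[OF q k]
    by (simp add: norm_mult norm_divide norm_power power_mult_distrib power_divide)
  also have "\<dots> = (cmod (square_wave_coeff q))\<^sup>2 / (2 * real q ^ 2)"
    using q by (simp add: field_simps power2_eq_square power_mult_distrib flip: power_add)
  finally show ?thesis .
qed

lemma success_prob_ge:
  assumes q: "q > 0" and k: "k \<in> zq_vecs n q"
  shows "(cmod (square_wave_coeff q) / q)\<^sup>2 \<le> success_prob n q 1 (init_state n q) (qft n q) (\<lambda>x. fst (fst x)) k"
proof -
  define f where "f x = (cmod (apply_op (qbasis n q 1) (qft n q) (dec_oracle n q k (init_state n q)) x))\<^sup>2" for x
  define key where "key b = (((k, int q - 1), b, 0) :: basis)" for b
  have "(cmod (square_wave_coeff q) / q)\<^sup>2 = (\<Sum>b\<in>UNIV. f (key b))"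
    using norm_amplitude_at_key[OF q k, of True] norm_amplitude_at_key[OF q k, of False]
    by (simp add: UNIV_bool f_def key_def power_divide)
  also have "\<dots> = sum f (range key)"
    by (simp add: sum.reindex inj_def key_def)
  also have "\<dots> \<le> sum f {x \<in> qbasis n q 1. fst (fst x) = k}"
    using q k finite_qbasis[of n q 1] by (intro sum_mono2) (auto simp: f_def key_def qbasis_def)
  also have "\<dots> = success_prob n q 1 (init_state n q) (qft n q) (\<lambda>x. fst (fst x)) k"
    by (simp add: success_prob_def f_def)
  finally show ?thesis .
qed

theorem corollary1:
  shows "\<exists>\<epsilon> :: nat \<Rightarrow> real. (\<epsilon> \<longlonglongrightarrow> 0) \<and>
     (\<forall>n q. n \<ge> 1 \<longrightarrow> q \<ge> 2 \<longrightarrow>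
       (\<exists>m \<psi> U out. unit_state (qbasis n q m) \<psi> \<and> unitary_on (qbasis n q m) U \<and>
          (\<forall>k \<in> zq_vecs n q. success_prob n q m \<psi> U out k \<ge> 4 / pi^2 - \<epsilon> q)))"
proof -
  define \<epsilon> where "\<epsilon> q = 4 / pi^2 * (sin (pi / real q))\<^sup>2" for q :: nat
  have "\<epsilon> \<longlonglongrightarrow> 0"
    unfolding \<epsilon>_def by real_asymp
  moreover have "4 / pi^2 - \<epsilon> q \<le> success_prob n q 1 (init_state n q) (qft n q) (\<lambda>x. fst (fst x)) k"
    if q: "q \<ge> 2" and k: "k \<in> zq_vecs n q" for n q k
  proof -
    have "4 / pi^2 - \<epsilon> q = (2 * cos (pi / q) / pi)\<^sup>2"
      unfolding \<epsilon>_def by (simp add: power_divide power_mult_distrib cos_squared_eq diff_divide_distrib)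
    also have "\<dots> \<le> (cmod (square_wave_coeff q) / q)\<^sup>2"
      using q by (rule norm_square_wave_coeff_ge)
    also have "\<dots> \<le> success_prob n q 1 (init_state n q) (qft n q) (\<lambda>x. fst (fst x)) k"
      using q k by (intro success_prob_ge) auto
    finally show ?thesis .
  qed
  moreover have "unit_state (qbasis n q 1) (init_state n q)" and "unitary_on (qbasis n q 1) (qft n q)"
    if "q \<ge> 2" for n q
    using that by (intro unit_state_init_state unitary_on_qft; simp)+
  ultimately show ?thesis
    by blast
qed

end
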